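(* Let $\Gamma_N\subset\mathbb{Z}^2$ be an $N\times N$ square domain, $N\ge 1$. If $N+1$ is prime, then the sandpile group $G_{\Gamma_N}$ has a cyclic subgroup isomorphic to $\mathbb{Z}/(N+1)\mathbb{Z}$, of order $N+1$.
   Context: An $N\times N$ square domain is a set $\{a,\dots,a+N-1\}\times\{b,\dots,b+N-1\}\subset\mathbb{Z}^2$. For finite $\Gamma\subset\mathbb{Z}^2$, the reduced Laplacian is $(\Delta_\Gamma f)(v)=\sum_{w\in\Gamma,\,w\sim v}f(w)-4f(v)$ (nearest-neighbor adjacency in $\mathbb{Z}^2$; all vertices outside $\Gamma$ are contracted to a sink), and the sandpile group is $G_\Gamma=\mathbb{Z}^\Gamma/\Delta_\Gamma(\mathbb{Z}^\Gamma)$. *)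

theory Defs
  imports "HOL-Algebra.Algebra"
begin

definition square_domain :: "int \<Rightarrow> int \<Rightarrow> nat \<Rightarrow> (int \<times> int) set" where
  "square_domain a b N = {a..<a + int N} \<times> {b..<b + int N}"

definition adj :: "int \<times> int \<Rightarrow> int \<times> int \<Rightarrow> bool" where
  "adj v w \<longleftrightarrow> \<bar>fst v - fst w\<bar> + \<bar>snd v - snd w\<bar> = 1"

definition lattice_group :: "(int \<times> int) set \<Rightarrow> ((int \<times> int) \<Rightarrow> int) monoid" where
  "lattice_group \<Gamma> = \<lparr> carrier = {f. \<forall>v. v \<notin> \<Gamma> \<longrightarrow> f v = 0},
                        monoid.mult = (\<lambda>f g v. f v + g v),
                        monoid.one = (\<lambda>v. 0) \<rparr>"

text \<open>Reduced Laplacian (sink = everything outside Gamma).\<close>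
definition reduced_laplacian :: "(int \<times> int) set \<Rightarrow> ((int \<times> int) \<Rightarrow> int) \<Rightarrow> (int \<times> int) \<Rightarrow> int" where
  "reduced_laplacian \<Gamma> f v =
     (if v \<in> \<Gamma> then (\<Sum>w\<in>{w\<in>\<Gamma>. adj w v}. f w) - 4 * f v else 0)"

definition sandpile_group :: "(int \<times> int) set \<Rightarrow> ((int \<times> int) \<Rightarrow> int) set monoid" where
  "sandpile_group \<Gamma> =
     lattice_group \<Gamma> Mod (reduced_laplacian \<Gamma> ` carrier (lattice_group \<Gamma>))"

end

theory Submission
  imports Defs
begin

(*
  Let g(x,y) = (x - a + 1)(y - b + 1) on the square. Its reduced Laplacian is N + 1 times an
  integer configuration f supported on the top and right edges, so the class of f in the
  sandpile group has order dividing the prime N + 1. It is not trivial: if f = Delta u, then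
  g - (N + 1) u is harmonic on the square and vanishes outside it, hence is zero by the
  discrete maximum principle, which is impossible since g = 1 at the lower-left corner.
*)

lemma (in group) powers_iso_integer_mod_group:
  assumes c: "c \<in> carrier G"
  shows "G\<lparr>carrier := range (\<lambda>i::int. c [^] i)\<rparr> \<cong> integer_mod_group (ord c)"
proof -
  let ?n = "int (ord c)" and ?Z = "integer_mod_group (ord c)"
  have pow_mod: "c [^] (i mod ?n) = c [^] i" for i
    by (simp add: int_pow_eq[OF c] mod_eq_dvd_iff[symmetric])
  have mod_carrier: "i mod ?n \<in> carrier ?Z" for i
    by (simp add: carrier_integer_mod_group)
  have carrier_mod: "i mod ?n = i" if "i \<in> carrier ?Z" for i
    using that by (auto simp: carrier_integer_mod_group split: if_splits)
  have "(\<lambda>i. c [^] i) \<in> iso ?Z (G\<lparr>carrier := range (\<lambda>i::int. c [^] i)\<rparr>)"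
  proof (rule isoI)
    show "(\<lambda>i. c [^] i) \<in> hom ?Z (G\<lparr>carrier := range (\<lambda>i::int. c [^] i)\<rparr>)"
      by (rule homI) (auto simp: pow_mod int_pow_mult c)
    have "inj_on (\<lambda>i. c [^] i) (carrier ?Z)"
    proof (rule inj_onI)
      fix i j assume "i \<in> carrier ?Z" "j \<in> carrier ?Z" "c [^] i = c [^] j"
      then show "i = j"
        by (metis carrier_mod int_pow_eq[OF c] mod_eq_dvd_iff)
    qed
    moreover have "(\<lambda>i. c [^] i) ` carrier ?Z = range (\<lambda>i::int. c [^] i)"
      by (auto simp: image_iff) (metis pow_mod mod_carrier)
    ultimately show "bij_betw (\<lambda>i. c [^] i) (carrier ?Z) (carrier (G\<lparr>carrier := range (\<lambda>i::int. c [^] i)\<rparr>))"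
      by (simp add: bij_betw_def)
  qed
  then show ?thesis
    using group.iso_sym group_integer_mod_group is_iso_def by blast
qed

lemma (in group) ord_eq_prime:
  assumes "c \<in> carrier G" "Factorial_Ring.prime (p::nat)" "c [^] p = \<one>" "c \<noteq> \<one>"
  shows "ord c = p"
  using assms ord_eq_1 pow_eq_id prime_nat_iff by metis

lemma (in comm_group) Mod_subgroup_iso_integer_mod_group:
  assumes L: "subgroup L G" and f: "f \<in> carrier G"
    and p: "Factorial_Ring.prime (p::nat)" "f [^] p \<in> L" "f \<notin> L"
  shows "\<exists>H. subgroup H (G Mod L) \<and> (G Mod L)\<lparr>carrier := H\<rparr> \<cong> integer_mod_group p"
proof -
  interpret normal L G using L by (rule subgroup_imp_normal)
  interpret Q: group "G Mod L" by (rule factorgroup_is_group)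
  have hom: "(\<lambda>x. L #> x) \<in> hom G (G Mod L)" by (rule r_coset_hom_Mod)
  have c: "L #> f \<in> carrier (G Mod L)" using hom f by (simp add: hom_in_carrier)
  have "(L #> f) [^]\<^bsub>G Mod L\<^esub> p = L #> (f [^] p)"
    using hom_nat_pow[OF hom f is_group Q.is_group] by simp
  also have "\<dots> = \<one>\<^bsub>G Mod L\<^esub>"
    using p(2) L by (simp add: rcos_const)
  finally have "(L #> f) [^]\<^bsub>G Mod L\<^esub> p = \<one>\<^bsub>G Mod L\<^esub>" .
  moreover have "L #> f \<noteq> \<one>\<^bsub>G Mod L\<^esub>"
    using rcos_self[OF f L] p(3) by auto
  ultimately have "Q.ord (L #> f) = p"
    using Q.ord_eq_prime c p(1) by blast
  then show ?thesis
    using Q.powers_iso_integer_mod_group[OF c] Q.subgroup_of_powers[OF c] by auto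
qed

lemma lattice_group_carrier_outside:
  "f \<in> carrier (lattice_group \<Gamma>) \<Longrightarrow> v \<notin> \<Gamma> \<Longrightarrow> f v = 0"
  by (simp add: lattice_group_def del: split_paired_All)

lemma comm_group_lattice_group: "comm_group (lattice_group \<Gamma>)"
proof (rule comm_groupI)
  fix f assume "f \<in> carrier (lattice_group \<Gamma>)"
  then show "\<exists>g\<in>carrier (lattice_group \<Gamma>). g \<otimes>\<^bsub>lattice_group \<Gamma>\<^esub> f = \<one>\<^bsub>lattice_group \<Gamma>\<^esub>"
    by (intro bexI[of _ "\<lambda>v. - f v"]) (auto simp: lattice_group_def)
qed (auto simp: lattice_group_def algebra_simps)

lemma lattice_group_nat_pow:
  "f [^]\<^bsub>lattice_group \<Gamma>\<^esub> (n::nat) = (\<lambda>v. int n * f v)"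
  by (induction n) (auto simp: lattice_group_def algebra_simps)

lemma reduced_laplacian_hom:
  "reduced_laplacian \<Gamma> \<in> hom (lattice_group \<Gamma>) (lattice_group \<Gamma>)"
  by (rule homI) (auto simp: lattice_group_def reduced_laplacian_def sum.distrib)

lemma group_hom_reduced_laplacian:
  "group_hom (lattice_group \<Gamma>) (lattice_group \<Gamma>) (reduced_laplacian \<Gamma>)"
  using comm_group_lattice_group reduced_laplacian_hom
  by (simp add: group_hom_def group_hom_axioms_def comm_group.axioms(2))

lemma reduced_laplacian_uminus:
  "reduced_laplacian \<Gamma> (\<lambda>v. - f v) = (\<lambda>v. - reduced_laplacian \<Gamma> f v)"
  by (auto simp: reduced_laplacian_def sum_negf)

lemma reduced_laplacian_at:
  assumes f: "f \<in> carrier (lattice_group \<Gamma>)" and v: "(x, y) \<in> \<Gamma>"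
  shows "reduced_laplacian \<Gamma> f (x, y) =
           f (x + 1, y) + f (x - 1, y) + f (x, y + 1) + f (x, y - 1) - 4 * f (x, y)"
proof -
  let ?nbrs = "{(x + 1, y), (x - 1, y), (x, y + 1), (x, y - 1)}"
  have "{w \<in> \<Gamma>. adj w (x, y)} = \<Gamma> \<inter> ?nbrs"
    by (auto simp: adj_def abs_if split: if_splits)
  moreover have "(\<Sum>w\<in>\<Gamma> \<inter> ?nbrs. f w) = (\<Sum>w\<in>?nbrs. f w)"
    using f by (intro sum.mono_neutral_left) (auto intro: lattice_group_carrier_outside)
  ultimately show ?thesis
    using v by (simp add: reduced_laplacian_def)
qed

lemma obtain_rightmost_maximum:
  fixes w :: "int \<times> int \<Rightarrow> int"
  assumes fin: "finite S" and ne: "S \<noteq> {}"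
  obtains x y where "(x, y) \<in> S" "\<And>u. u \<in> S \<Longrightarrow> w u \<le> w (x, y)"
    "(x + 1, y) \<in> S \<Longrightarrow> w (x + 1, y) < w (x, y)"
proof -
  have "Max (w ` S) \<in> w ` S" using fin ne by (intro Max_in) auto
  then obtain m where m: "m \<in> S" "w m = Max (w ` S)" by (metis imageE)
  define T where "T = {u \<in> S. w u = Max (w ` S)}"
  have T: "finite T" "m \<in> T" using fin m by (simp_all add: T_def)
  have "Max (fst ` T) \<in> fst ` T" using T by (intro Max_in) auto
  then obtain x y where xy: "(x, y) \<in> T" "x = Max (fst ` T)" by (metis imageE prod.collapse)
  have max: "w u \<le> w (x, y)" if "u \<in> S" for u
    using Max_ge[OF finite_imageI[OF fin] imageI[OF that]] xy(1) by (simp add: T_def)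
  have "(x + 1, y) \<notin> T"
  proof
    assume "(x + 1, y) \<in> T"
    then have "x + 1 \<le> Max (fst ` T)"
      using Max_ge[OF finite_imageI[OF T(1)]] by (metis fst_conv imageI)
    with xy(2) show False by simp
  qed
  then have "w (x + 1, y) < w (x, y)" if "(x + 1, y) \<in> S"
    using max[OF that] that xy(1) by (simp add: T_def)
  moreover have "(x, y) \<in> S" using xy(1) by (simp add: T_def)
  ultimately show thesis using max that by blast
qed

lemma reduced_laplacian_nonneg_imp_nonpos:
  assumes fin: "finite \<Gamma>" and f: "f \<in> carrier (lattice_group \<Gamma>)"
    and subharmonic: "\<And>v. v \<in> \<Gamma> \<Longrightarrow> reduced_laplacian \<Gamma> f v \<ge> 0"
    and v: "v \<in> \<Gamma>"
  shows "f v \<le> 0"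
proof (rule ccontr)
  assume "\<not> f v \<le> 0"
  obtain x y where xy: "(x, y) \<in> \<Gamma>" and max: "\<And>u. u \<in> \<Gamma> \<Longrightarrow> f u \<le> f (x, y)"
    and right: "(x + 1, y) \<in> \<Gamma> \<Longrightarrow> f (x + 1, y) < f (x, y)"
    using obtain_rightmost_maximum[OF fin, of f] v by blast
  have pos: "f (x, y) > 0" using max[OF v] \<open>\<not> f v \<le> 0\<close> by simp
  have outside: "f u = 0" if "u \<notin> \<Gamma>" for u using f that by (rule lattice_group_carrier_outside)
  have le: "f u \<le> f (x, y)" for u using max outside pos by (cases "u \<in> \<Gamma>") auto
  have "f (x + 1, y) < f (x, y)" using right outside pos by (cases "(x + 1, y) \<in> \<Gamma>") auto
  then have "reduced_laplacian \<Gamma> f (x, y) < 0"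
    using reduced_laplacian_at[OF f xy] le[of "(x - 1, y)"] le[of "(x, y + 1)"] le[of "(x, y - 1)"]
    by linarith
  with subharmonic[OF xy] show False by simp
qed

lemma reduced_laplacian_eq_0_imp_eq_0:
  assumes fin: "finite \<Gamma>" and f: "f \<in> carrier (lattice_group \<Gamma>)"
    and harmonic: "reduced_laplacian \<Gamma> f = (\<lambda>v. 0)"
  shows "f = (\<lambda>v. 0)"
proof
  fix v
  show "f v = 0"
  proof (cases "v \<in> \<Gamma>")
    case True
    have "(\<lambda>v. - f v) \<in> carrier (lattice_group \<Gamma>)" using f by (simp add: lattice_group_def)
    then have "f v \<le> 0" "- f v \<le> 0"
      using reduced_laplacian_nonneg_imp_nonpos[OF fin f _ True]
        reduced_laplacian_nonneg_imp_nonpos[OF fin _ _ True, of "\<lambda>v. - f v"]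
      by (simp_all add: harmonic reduced_laplacian_uminus)
    then show ?thesis by simp
  qed (use f in \<open>rule lattice_group_carrier_outside\<close>)
qed

lemma inj_on_reduced_laplacian:
  assumes fin: "finite \<Gamma>"
  shows "inj_on (reduced_laplacian \<Gamma>) (carrier (lattice_group \<Gamma>))"
proof -
  interpret group_hom "lattice_group \<Gamma>" "lattice_group \<Gamma>" "reduced_laplacian \<Gamma>"
    by (rule group_hom_reduced_laplacian)
  have one: "\<one>\<^bsub>lattice_group \<Gamma>\<^esub> = (\<lambda>v. 0)" by (simp add: lattice_group_def)
  have "kernel (lattice_group \<Gamma>) (lattice_group \<Gamma>) (reduced_laplacian \<Gamma>) = {\<one>\<^bsub>lattice_group \<Gamma>\<^esub>}"
    using reduced_laplacian_eq_0_imp_eq_0[OF fin] hom_one G.one_closed by (auto simp: kernel_def one)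
  then show ?thesis by (simp add: inj_iff_trivial_ker)
qed

definition bilinear_potential :: "int \<Rightarrow> int \<Rightarrow> nat \<Rightarrow> int \<times> int \<Rightarrow> int" where
  "bilinear_potential a b N v =
     (if v \<in> square_domain a b N then (fst v - a + 1) * (snd v - b + 1) else 0)"

(* On a path of N sites, x - a + 1 is harmonic except at the far end, where its Laplacian is
   (N - 1) - 2 N = - (N + 1); the product rule for the grid Laplacian gives the square case. *)
definition edge_charge :: "int \<Rightarrow> int \<Rightarrow> nat \<Rightarrow> int \<times> int \<Rightarrow> int" where
  "edge_charge a b N v =
     (if v \<in> square_domain a b N
      then - ((if fst v = a + int N - 1 then snd v - b + 1 else 0)
              + (if snd v = b + int N - 1 then fst v - a + 1 else 0))
      else 0)"

lemma bilinear_potential_carrier: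
  "bilinear_potential a b N \<in> carrier (lattice_group (square_domain a b N))"
  by (simp add: bilinear_potential_def lattice_group_def)

lemma edge_charge_carrier:
  "edge_charge a b N \<in> carrier (lattice_group (square_domain a b N))"
  by (simp add: edge_charge_def lattice_group_def)

lemma reduced_laplacian_bilinear_potential:
  "reduced_laplacian (square_domain a b N) (bilinear_potential a b N) =
     (\<lambda>v. int (N + 1) * edge_charge a b N v)"
proof
  fix v :: "int \<times> int"
  obtain x y where v: "v = (x, y)" by force
  show "reduced_laplacian (square_domain a b N) (bilinear_potential a b N) v =
          int (N + 1) * edge_charge a b N v"
  proof (cases "v \<in> square_domain a b N")
    case False
    then show ?thesis by (simp add: reduced_laplacian_def edge_charge_def)
  next
    case True
    then have "a \<le> x" "x < a + int N" "b \<le> y" "y < b + int N"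
      using v by (auto simp: square_domain_def)
    then show ?thesis
      unfolding v reduced_laplacian_at[OF bilinear_potential_carrier True[unfolded v]]
      by (cases "x = a"; cases "y = b"; cases "x = a + int N - 1"; cases "y = b + int N - 1")
        (auto simp: bilinear_potential_def edge_charge_def square_domain_def algebra_simps)
  qed
qed

lemma edge_charge_nat_pow:
  "edge_charge a b N [^]\<^bsub>lattice_group (square_domain a b N)\<^esub> (N + 1) =
     reduced_laplacian (square_domain a b N) (bilinear_potential a b N)"
  unfolding lattice_group_nat_pow reduced_laplacian_bilinear_potential ..

lemma edge_charge_notin_reduced_laplacian_image:
  fixes a b :: int and N :: nat
  assumes "N \<ge> 1"
  defines "\<Gamma> \<equiv> square_domain a b N"
  shows "edge_charge a b N \<notin> reduced_laplacian \<Gamma> ` carrier (lattice_group \<Gamma>)"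
proof
  let ?G = "lattice_group \<Gamma>" and ?\<Delta> = "reduced_laplacian \<Gamma>" and ?g = "bilinear_potential a b N"
  interpret group_hom ?G ?G ?\<Delta> by (rule group_hom_reduced_laplacian)
  assume "edge_charge a b N \<in> ?\<Delta> ` carrier ?G"
  then obtain u where u: "u \<in> carrier ?G" "edge_charge a b N = ?\<Delta> u" by blast
  then have "?\<Delta> (u [^]\<^bsub>?G\<^esub> (N + 1)) = edge_charge a b N [^]\<^bsub>?G\<^esub> (N + 1)"
    by (simp only: hom_nat_pow)
  also have "\<dots> = ?\<Delta> ?g" unfolding \<Gamma>_def by (rule edge_charge_nat_pow)
  finally have "?\<Delta> (u [^]\<^bsub>?G\<^esub> (N + 1)) = ?\<Delta> ?g" .
  moreover have "u [^]\<^bsub>?G\<^esub> (N + 1) \<in> carrier ?G" using u(1) by simp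
  ultimately have "u [^]\<^bsub>?G\<^esub> (N + 1) = ?g"
    using inj_on_reduced_laplacian[of \<Gamma>] bilinear_potential_carrier
    by (simp add: \<Gamma>_def square_domain_def inj_onD)
  then have "int (N + 1) * u (a, b) = ?g (a, b)" by (metis lattice_group_nat_pow)
  also have "\<dots> = 1" using assms(1) by (simp add: bilinear_potential_def square_domain_def)
  finally have "int (N + 1) dvd 1" by (metis dvd_triv_left)
  then show False using assms(1) by simp
qed

theorem lemma4:
  fixes a b :: int and N :: nat
  assumes "N \<ge> 1" and "Factorial_Ring.prime (N + 1)"
  shows "\<exists>H. subgroup H (sandpile_group (square_domain a b N)) \<and>
             (sandpile_group (square_domain a b N))\<lparr>carrier := H\<rparr> \<cong> integer_mod_group (N + 1)"
proof -
  let ?G = "lattice_group (square_domain a b N)" and ?\<Delta> = "reduced_laplacian (square_domain a b N)"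
  interpret group_hom ?G ?G ?\<Delta> by (rule group_hom_reduced_laplacian)
  have "edge_charge a b N [^]\<^bsub>?G\<^esub> (N + 1) \<in> ?\<Delta> ` carrier ?G"
    unfolding edge_charge_nat_pow using bilinear_potential_carrier by (rule imageI)
  then show ?thesis
    using comm_group.Mod_subgroup_iso_integer_mod_group[OF comm_group_lattice_group img_is_subgroup
        edge_charge_carrier[of a b N] assms(2)]
      edge_charge_notin_reduced_laplacian_image[OF assms(1)]
    by (simp add: sandpile_group_def)
qed

end
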